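(* Let $k\ge\ell\ge1$ be integers with $k+\ell\ge6$, let $G$ be a finite digraph, and let $Z\subseteq V(G)$ with $|Z|\ge 2$. Then $$\Pr[\phi\in\mathcal S\text{ and }\mathrm{Im}\,\phi\subseteq Z]\le \frac{(k-1)^{k-1}\ell^\ell}{(m-1)^{m-1}}\,\mu(Z)^2\,\frac{\delta(Z)}{2}\,\max_{z\in Z}\rho_Z(z)^{m-1}.$$
   Context: Put $m=k+\ell$. Digraphs are finite, without loops; $xy$ denotes an arc from $x$ to $y$; two vertices are adjacent if at least one of $xy,yx$ is an arc. The oriented star $S_{k,\ell}$ has a center $c$, a set $O$ of $k$ out-leaves and a set $I$ of $\ell$ in-leaves; its arcs are exactly $co$ ($o\in O$) and $ic$ ($i\in I$). For a digraph $G$ on $n$ vertices, let $\phi$ be a uniformly random map from $V(S_{k,\ell})$ to $V(G)$ (all $n^{m+1}$ maps equally likely), and let $\mathcal S$ be the set of maps $\phi$ that are isomorphisms from $S_{k,\ell}$ onto the induced subdigraph $G[\mathrm{Im}\,\phi]$ (in particular injective). For $A\subseteq V(G)$: $\mu(A)=|A|/n$, and $\rho_A(x)$ is the number of vertices of $A$ adjacent to $x$, divided by $n$. $\delta(Z)$ is the number of adjacent unordered pairs of vertices of $Z$ divided by $\binom{|Z|}{2}$. *)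

theory Defs
  imports Complex_Main "HOL-Library.FuncSet"
begin

definition digraph :: "'a set \<Rightarrow> ('a \<Rightarrow> 'a \<Rightarrow> bool) \<Rightarrow> bool" where
  "digraph V Arc \<longleftrightarrow> finite V \<and> (\<forall>x y. Arc x y \<longrightarrow> x \<in> V \<and> y \<in> V) \<and> (\<forall>x. \<not> Arc x x)"

definition adj :: "('a \<Rightarrow> 'a \<Rightarrow> bool) \<Rightarrow> 'a \<Rightarrow> 'a \<Rightarrow> bool" where
  "adj Arc x y \<longleftrightarrow> Arc x y \<or> Arc y x"

text \<open>Vertices of the oriented star S_{k,l}: centre, out-leaves Out i (i<k), in-leaves In i (i<l).\<close>
datatype starv = Ctr | Out nat | In nat

definition star_verts :: "nat \<Rightarrow> nat \<Rightarrow> starv set" where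
  "star_verts k l = {Ctr} \<union> Out ` {..<k} \<union> In ` {..<l}"

fun star_arc :: "starv \<Rightarrow> starv \<Rightarrow> bool" where
  "star_arc Ctr (Out _) = True"
| "star_arc (In _) Ctr = True"
| "star_arc _ _ = False"

definition star_iso :: "nat \<Rightarrow> nat \<Rightarrow> ('a \<Rightarrow> 'a \<Rightarrow> bool) \<Rightarrow> (starv \<Rightarrow> 'a) \<Rightarrow> bool" where
  "star_iso k l Arc \<phi> \<longleftrightarrow> inj_on \<phi> (star_verts k l) \<and>
     (\<forall>u\<in>star_verts k l. \<forall>v\<in>star_verts k l. Arc (\<phi> u) (\<phi> v) \<longleftrightarrow> star_arc u v)"

definition star_prob :: "nat \<Rightarrow> nat \<Rightarrow> 'a set \<Rightarrow> ('a \<Rightarrow> 'a \<Rightarrow> bool) \<Rightarrow> 'a set \<Rightarrow> real" where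
  "star_prob k l V Arc Z =
     real (card {\<phi> \<in> star_verts k l \<rightarrow>\<^sub>E V. star_iso k l Arc \<phi> \<and> \<phi> ` star_verts k l \<subseteq> Z})
     / real (card V) ^ (k + l + 1)"

definition mu :: "'a set \<Rightarrow> 'a set \<Rightarrow> real" where
  "mu V A = real (card A) / real (card V)"

definition rho :: "'a set \<Rightarrow> ('a \<Rightarrow> 'a \<Rightarrow> bool) \<Rightarrow> 'a set \<Rightarrow> 'a \<Rightarrow> real" where
  "rho V Arc A x = real (card {y \<in> A. adj Arc x y}) / real (card V)"

definition density :: "('a \<Rightarrow> 'a \<Rightarrow> bool) \<Rightarrow> 'a set \<Rightarrow> real" where
  "density Arc Z = real (card {{x, y} | x y. x \<in> Z \<and> y \<in> Z \<and> x \<noteq> y \<and> adj Arc x y})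
     / real (card Z choose 2)"

end

theory Submission
  imports Defs "HOL-Analysis.Convex"
begin

text \<open>Sort the induced copies of \<open>S\<^sub>k\<^sub>,\<^sub>l\<close> in \<open>Z\<close> by the image \<open>z\<close> of the centre. Out-leaves must go to
  one-way out-neighbours and in-leaves to one-way in-neighbours of \<open>z\<close> in \<open>Z\<close>, so there are at
  most \<open>a\<^sup>k b\<^sup>l\<close> copies centred at \<open>z\<close>, where \<open>a + b\<close> is at most the degree of \<open>z\<close> in \<open>Z\<close>. Keeping
  one factor \<open>a\<close> and bounding \<open>a\<^bsup>k-1\<^esup> b\<^sup>l\<close> by AM-GM in terms of \<open>(a + b)\<^bsup>m-1\<^esup>\<close>, the remaining sum of
  the \<open>a\<close>'s counts each arc of \<open>G[Z]\<close> at most once, i.e. is at most \<open>\<delta>(Z) |Z|(|Z| - 1)/2\<close>.\<close>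

lemma amgm_two_powers:
  fixes x y :: real and p q :: nat
  assumes "p > 0" "q > 0" "x \<ge> 0" "y \<ge> 0"
  shows "x ^ p * y ^ q \<le> real p ^ p * real q ^ q / real (p + q) ^ (p + q) * (x + y) ^ (p + q)"
proof (cases "x = 0 \<or> y = 0")
  case True
  then have "x ^ p * y ^ q = 0" using assms by auto
  moreover have "0 \<le> real p ^ p * real q ^ q / real (p + q) ^ (p + q) * (x + y) ^ (p + q)"
    using assms by simp
  ultimately show ?thesis by linarith
next
  case False
  with assms have x: "x > 0" and y: "y > 0" by auto
  define N where "N = real (p + q)"
  have N: "N > 0" using assms by (simp add: N_def)
  have "(x/p) powr (p/N) * (y/q) powr (q/N) \<le> (p/N) * (x/p) + (q/N) * (y/q)"
    by (rule Youngs_inequality_0)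
      (use assms x y N in \<open>auto simp: N_def add_divide_distrib[symmetric]\<close>)
  also have "\<dots> = (x + y) / N" using assms by (simp add: add_divide_distrib)
  finally have "((x/p) powr (p/N) * (y/q) powr (q/N)) ^ (p + q) \<le> ((x + y) / N) ^ (p + q)"
    by (rule power_mono) simp
  moreover have "((x/p) powr (p/N) * (y/q) powr (q/N)) ^ (p + q) = (x/p) ^ p * (y/q) ^ q"
  proof -
    have "((x/p) powr (p/N) * (y/q) powr (q/N)) ^ (p + q)
        = (x/p) powr (real (p + q) * (p/N)) * (y/q) powr (real (p + q) * (q/N))"
      using x y assms by (simp add: power_mult_distrib powr_power)
    also have "\<dots> = (x/p) powr (real p) * (y/q) powr (real q)"
      using N by (simp add: N_def)
    finally show ?thesis using x y assms by (simp add: powr_realpow)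
  qed
  ultimately have "(x/p) ^ p * (y/q) ^ q \<le> ((x + y) / N) ^ (p + q)" by simp
  then show ?thesis using assms N unfolding N_def
    by (simp add: power_divide field_simps)
qed

definition out_nbrs :: "('a \<Rightarrow> 'a \<Rightarrow> bool) \<Rightarrow> 'a set \<Rightarrow> 'a \<Rightarrow> 'a set" where
  "out_nbrs Arc Z z = {y \<in> Z. Arc z y \<and> \<not> Arc y z}"

definition in_nbrs :: "('a \<Rightarrow> 'a \<Rightarrow> bool) \<Rightarrow> 'a set \<Rightarrow> 'a \<Rightarrow> 'a set" where
  "in_nbrs Arc Z z = {y \<in> Z. Arc y z \<and> \<not> Arc z y}"

definition adj_pairs :: "('a \<Rightarrow> 'a \<Rightarrow> bool) \<Rightarrow> 'a set \<Rightarrow> 'a set set" where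
  "adj_pairs Arc Z = {{x, y} | x y. x \<in> Z \<and> y \<in> Z \<and> x \<noteq> y \<and> adj Arc x y}"

definition star_maps_centred_at :: "nat \<Rightarrow> nat \<Rightarrow> ('a \<Rightarrow> 'a \<Rightarrow> bool) \<Rightarrow> 'a set \<Rightarrow> 'a \<Rightarrow> (starv \<Rightarrow> 'a) set" where
  "star_maps_centred_at k l Arc Z z = PiE (star_verts k l)
     (\<lambda>v. case v of Ctr \<Rightarrow> {z} | Out _ \<Rightarrow> out_nbrs Arc Z z | In _ \<Rightarrow> in_nbrs Arc Z z)"

lemma finite_star_maps_centred_at:
  "finite Z \<Longrightarrow> finite (star_maps_centred_at k l Arc Z z)"
  unfolding star_maps_centred_at_def
  by (intro finite_PiE) (auto simp: star_verts_def out_nbrs_def in_nbrs_def split: starv.splits)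

lemma card_star_maps_centred_at:
  "card (star_maps_centred_at k l Arc Z z) = card (out_nbrs Arc Z z) ^ k * card (in_nbrs Arc Z z) ^ l"
proof -
  let ?F = "\<lambda>v. card (case v of Ctr \<Rightarrow> {z} | Out _ \<Rightarrow> out_nbrs Arc Z z | In _ \<Rightarrow> in_nbrs Arc Z z)"
  have verts: "star_verts k l = insert Ctr (Out ` {..<k} \<union> In ` {..<l})"
    by (auto simp: star_verts_def)
  have "card (star_maps_centred_at k l Arc Z z) = prod ?F (star_verts k l)"
    unfolding star_maps_centred_at_def by (rule card_PiE) (simp add: star_verts_def)
  also have "\<dots> = prod ?F (Out ` {..<k}) * prod ?F (In ` {..<l})"
    unfolding verts by (subst prod.insert) (auto intro: prod.union_disjoint)
  also have "\<dots> = card (out_nbrs Arc Z z) ^ k * card (in_nbrs Arc Z z) ^ l"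
    by (simp add: prod.reindex inj_on_def)
  finally show ?thesis .
qed

lemma star_iso_in_star_maps_centred_at:
  assumes "\<phi> \<in> star_verts k l \<rightarrow>\<^sub>E V" "star_iso k l Arc \<phi>" "\<phi> ` star_verts k l \<subseteq> Z"
  shows "\<phi> \<in> star_maps_centred_at k l Arc Z (\<phi> Ctr)"
proof -
  have ctr: "Ctr \<in> star_verts k l" by (simp add: star_verts_def)
  have "\<phi> v \<in> (case v of Ctr \<Rightarrow> {\<phi> Ctr} | Out _ \<Rightarrow> out_nbrs Arc Z (\<phi> Ctr) | In _ \<Rightarrow> in_nbrs Arc Z (\<phi> Ctr))"
    if v: "v \<in> star_verts k l" for v
  proof -
    have "Arc (\<phi> Ctr) (\<phi> v) \<longleftrightarrow> star_arc Ctr v" "Arc (\<phi> v) (\<phi> Ctr) \<longleftrightarrow> star_arc v Ctr"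
      using assms(2) v ctr by (auto simp: star_iso_def)
    then show ?thesis using assms(3) v
      by (cases v) (auto simp: out_nbrs_def in_nbrs_def)
  qed
  then show ?thesis using assms(1) by (auto simp: star_maps_centred_at_def PiE_iff)
qed

lemma card_star_isos_le:
  assumes "finite Z"
  shows "card {\<phi> \<in> star_verts k l \<rightarrow>\<^sub>E V. star_iso k l Arc \<phi> \<and> \<phi> ` star_verts k l \<subseteq> Z}
    \<le> (\<Sum>z\<in>Z. card (out_nbrs Arc Z z) ^ k * card (in_nbrs Arc Z z) ^ l)"
proof -
  let ?S = "{\<phi> \<in> star_verts k l \<rightarrow>\<^sub>E V. star_iso k l Arc \<phi> \<and> \<phi> ` star_verts k l \<subseteq> Z}"
  have "?S \<subseteq> (\<Union>z\<in>Z. star_maps_centred_at k l Arc Z z)"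
  proof
    fix \<phi> assume "\<phi> \<in> ?S"
    then have "\<phi> \<in> star_maps_centred_at k l Arc Z (\<phi> Ctr)"
      by (auto intro: star_iso_in_star_maps_centred_at)
    moreover have "\<phi> Ctr \<in> Z" using \<open>\<phi> \<in> ?S\<close> by (auto simp: star_verts_def)
    ultimately show "\<phi> \<in> (\<Union>z\<in>Z. star_maps_centred_at k l Arc Z z)" by blast
  qed
  then have "card ?S \<le> card (\<Union>z\<in>Z. star_maps_centred_at k l Arc Z z)"
    using assms by (intro card_mono) (auto simp: finite_star_maps_centred_at)
  also have "\<dots> \<le> (\<Sum>z\<in>Z. card (star_maps_centred_at k l Arc Z z))"
    using assms by (rule card_UN_le)
  finally show ?thesis by (simp add: card_star_maps_centred_at)
qed

lemma card_out_plus_in_nbrs_le: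
  assumes "finite Z"
  shows "card (out_nbrs Arc Z z) + card (in_nbrs Arc Z z) \<le> card {y \<in> Z. adj Arc z y}"
proof -
  have "card (out_nbrs Arc Z z) + card (in_nbrs Arc Z z) = card (out_nbrs Arc Z z \<union> in_nbrs Arc Z z)"
    using assms by (intro card_Un_disjoint[symmetric]) (auto simp: out_nbrs_def in_nbrs_def)
  also have "\<dots> \<le> card {y \<in> Z. adj Arc z y}"
    using assms by (intro card_mono) (auto simp: out_nbrs_def in_nbrs_def adj_def)
  finally show ?thesis .
qed

text \<open>Each adjacent pair is counted at most once: a one-way arc \<open>z \<rightarrow> y\<close> is seen from its tail only.\<close>

lemma sum_card_out_nbrs_le_card_adj_pairs:
  assumes "finite Z"
  shows "(\<Sum>z\<in>Z. card (out_nbrs Arc Z z)) \<le> card (adj_pairs Arc Z)"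
proof -
  have "(\<Sum>z\<in>Z. card (out_nbrs Arc Z z)) = card (Sigma Z (out_nbrs Arc Z))"
    using assms by (simp add: card_SigmaI out_nbrs_def)
  also have "\<dots> \<le> card (adj_pairs Arc Z)"
  proof (rule card_inj_on_le)
    show "inj_on (\<lambda>(z, y). {z, y}) (Sigma Z (out_nbrs Arc Z))"
      by (auto simp: inj_on_def out_nbrs_def doubleton_eq_iff)
    show "(\<lambda>(z, y). {z, y}) ` Sigma Z (out_nbrs Arc Z) \<subseteq> adj_pairs Arc Z"
      unfolding adj_pairs_def out_nbrs_def adj_def by fastforce
    show "finite (adj_pairs Arc Z)"
      by (rule finite_subset[of _ "Pow Z"]) (auto simp: adj_pairs_def assms)
  qed
  finally show ?thesis .
qed

lemma power_mult_power_le_amgm: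
  fixes a b :: real and k l :: nat
  assumes "k \<ge> 1" "l \<ge> 1" "a \<ge> 0" "b \<ge> 0"
  shows "a ^ k * b ^ l
    \<le> a * (real (k - 1) ^ (k - 1) * real l ^ l / real (k + l - 1) ^ (k + l - 1) * (a + b) ^ (k + l - 1))"
proof (cases "k = 1")
  case True
  with assms show ?thesis by (simp add: mult_left_mono power_mono)
next
  case False
  have e: "k - 1 + l = k + l - 1" using assms(1) by simp
  have "a ^ (k - 1) * b ^ l
      \<le> real (k - 1) ^ (k - 1) * real l ^ l / real (k - 1 + l) ^ (k - 1 + l) * (a + b) ^ (k - 1 + l)"
    using assms False by (intro amgm_two_powers) auto
  then have "a * (a ^ (k - 1) * b ^ l)
      \<le> a * (real (k - 1) ^ (k - 1) * real l ^ l / real (k + l - 1) ^ (k + l - 1) * (a + b) ^ (k + l - 1))"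
    unfolding e using assms(3) by (rule mult_left_mono)
  moreover have "a ^ k * b ^ l = a * (a ^ (k - 1) * b ^ l)"
    using assms(1) by (simp add: mult.assoc flip: power_Suc)
  ultimately show ?thesis by (simp only:)
qed

lemma card_star_isos_le_adj_pairs:
  fixes D :: real
  assumes "finite Z" "k \<ge> 1" "l \<ge> 1"
    and deg: "\<And>z. z \<in> Z \<Longrightarrow> real (card {y \<in> Z. adj Arc z y}) \<le> D"
  shows "real (card {\<phi> \<in> star_verts k l \<rightarrow>\<^sub>E V. star_iso k l Arc \<phi> \<and> \<phi> ` star_verts k l \<subseteq> Z})
    \<le> real (k - 1) ^ (k - 1) * real l ^ l / real (k + l - 1) ^ (k + l - 1) * D ^ (k + l - 1)
       * real (card (adj_pairs Arc Z))"
proof -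
  define C where "C = real (k - 1) ^ (k - 1) * real l ^ l / real (k + l - 1) ^ (k + l - 1)"
  define a where "a z = real (card (out_nbrs Arc Z z))" for z
  define b where "b z = real (card (in_nbrs Arc Z z))" for z
  have C: "C \<ge> 0" by (simp add: C_def)
  have D_nonneg: "D \<ge> 0" if "z \<in> Z" for z using deg[OF that] by (meson of_nat_0_le_iff order_trans)
  have per_centre: "a z ^ k * b z ^ l \<le> a z * (C * D ^ (k + l - 1))" if z: "z \<in> Z" for z
  proof -
    have "a z + b z \<le> D"
      using card_out_plus_in_nbrs_le[OF assms(1), of Arc z] deg[OF z]
      unfolding a_def b_def by linarith
    then have "C * (a z + b z) ^ (k + l - 1) \<le> C * D ^ (k + l - 1)"
      using C by (intro mult_left_mono power_mono) (auto simp: a_def b_def)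
    moreover have "a z ^ k * b z ^ l \<le> a z * (C * (a z + b z) ^ (k + l - 1))"
      unfolding C_def by (rule power_mult_power_le_amgm[OF assms(2,3)]) (auto simp: a_def b_def)
    moreover have "a z \<ge> 0" by (simp add: a_def)
    ultimately show ?thesis by (meson mult_left_mono order_trans)
  qed
  have "real (card {\<phi> \<in> star_verts k l \<rightarrow>\<^sub>E V. star_iso k l Arc \<phi> \<and> \<phi> ` star_verts k l \<subseteq> Z})
      \<le> real (\<Sum>z\<in>Z. card (out_nbrs Arc Z z) ^ k * card (in_nbrs Arc Z z) ^ l)"
    using card_star_isos_le[OF assms(1)] by (simp only: of_nat_le_iff)
  also have "\<dots> = (\<Sum>z\<in>Z. a z ^ k * b z ^ l)"
    by (simp add: a_def b_def)
  also have "\<dots> \<le> (\<Sum>z\<in>Z. a z * (C * D ^ (k + l - 1)))"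
    by (intro sum_mono per_centre)
  also have "\<dots> = C * D ^ (k + l - 1) * (\<Sum>z\<in>Z. a z)"
    by (simp add: sum_distrib_right mult.commute)
  also have "\<dots> \<le> C * D ^ (k + l - 1) * real (card (adj_pairs Arc Z))"
  proof (cases "Z = {}")
    case False
    then have "D \<ge> 0" using D_nonneg by blast
    then show ?thesis
      using sum_card_out_nbrs_le_card_adj_pairs[OF assms(1), of Arc] C
      unfolding a_def by (intro mult_left_mono) (auto simp flip: of_nat_sum)
  qed (simp add: adj_pairs_def)
  finally show ?thesis by (simp add: C_def)
qed

lemma card_adj_pairs_le_density:
  assumes "card Z \<ge> 2"
  shows "real (card (adj_pairs Arc Z)) \<le> real (card Z) ^ 2 * (density Arc Z / 2)"
proof -
  define h where "h = real (card Z choose 2)"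
  have h: "h > 0" using assms by (simp add: h_def)
  have "2 * (card Z choose 2) \<le> card Z * (card Z - 1)"
    by (simp add: choose_two)
  also have "\<dots> \<le> card Z * card Z" by simp
  finally have "2 * (card Z choose 2) \<le> card Z * card Z" .
  then have "2 * h \<le> real (card Z) ^ 2"
    unfolding h_def power2_eq_square by (metis of_nat_le_iff of_nat_mult of_nat_numeral)
  then have "real (card (adj_pairs Arc Z)) * (2 * h) \<le> real (card (adj_pairs Arc Z)) * real (card Z) ^ 2"
    by (intro mult_left_mono) auto
  then show ?thesis using h
    by (simp add: density_def adj_pairs_def h_def field_simps)
qed

theorem lemma4:
  fixes k l :: nat and V Z :: "'a set" and Arc :: "'a \<Rightarrow> 'a \<Rightarrow> bool"
  assumes "k \<ge> l" and "l \<ge> 1" and "k + l \<ge> 6"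
    and "digraph V Arc"
    and "Z \<subseteq> V" and "card Z \<ge> 2"
  shows "star_prob k l V Arc Z \<le>
    (real (k - 1) ^ (k - 1) * real l ^ l / real (k + l - 1) ^ (k + l - 1))
    * mu V Z ^ 2 * (density Arc Z / 2) * (Max (rho V Arc Z ` Z)) ^ (k + l - 1)"
proof -
  define C where "C = real (k - 1) ^ (k - 1) * real l ^ l / real (k + l - 1) ^ (k + l - 1)"
  define M where "M = Max (rho V Arc Z ` Z)"
  define n where "n = real (card V)"
  have finZ: "finite Z" using assms(4,5) finite_subset by (auto simp: digraph_def)
  have "card Z \<le> card V" using assms(4,5) by (intro card_mono) (auto simp: digraph_def)
  then have n: "n > 0" using assms(6) by (simp add: n_def)
  have "real (card {y \<in> Z. adj Arc z y}) \<le> n * M" if "z \<in> Z" for z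
    using Max_ge[OF _ imageI[OF that], of "rho V Arc Z"] finZ n
    by (simp add: M_def n_def rho_def field_simps)
  then have "real (card {\<phi> \<in> star_verts k l \<rightarrow>\<^sub>E V. star_iso k l Arc \<phi> \<and> \<phi> ` star_verts k l \<subseteq> Z})
      \<le> C * (n * M) ^ (k + l - 1) * real (card (adj_pairs Arc Z))"
    unfolding C_def using assms(1,2) by (intro card_star_isos_le_adj_pairs[OF finZ]) auto
  then have "star_prob k l V Arc Z \<le> C * (n * M) ^ (k + l - 1) * real (card (adj_pairs Arc Z)) / n ^ (k + l + 1)"
    unfolding star_prob_def n_def by (rule divide_right_mono) simp
  also have "\<dots> = C * M ^ (k + l - 1) * (real (card (adj_pairs Arc Z)) / n ^ 2)"
    using n assms(2) by (simp add: power_mult_distrib field_simps flip: power_add)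
  also have "\<dots> \<le> C * M ^ (k + l - 1) * (mu V Z ^ 2 * (density Arc Z / 2))"
  proof (rule mult_left_mono)
    show "real (card (adj_pairs Arc Z)) / n ^ 2 \<le> mu V Z ^ 2 * (density Arc Z / 2)"
      using card_adj_pairs_le_density[OF assms(6), of Arc] n
      by (simp add: mu_def n_def power_divide field_simps)
    obtain z where "z \<in> Z" using assms(6) by fastforce
    then have "rho V Arc Z z \<le> M" unfolding M_def using finZ by (intro Max_ge) auto
    moreover have "0 \<le> rho V Arc Z z" by (simp add: rho_def)
    ultimately have "0 \<le> M" by linarith
    then show "0 \<le> C * M ^ (k + l - 1)" by (simp add: C_def)
  qed
  finally show ?thesis by (simp add: C_def M_def mult_ac)
qed

end
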